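(* Let $y:[0,\tau_f]\to\mathbb{R}^{n_y}$, $y(\tau)=(q(\tau),v(\tau),t(\tau))$, be a solution of the time-freezing system $y'\in F_{\mathrm{TF}}(y,u)$ with $y(0)\in\Sigma$, and suppose that $\varphi(x(\tau),u(\tau))\le 0$ for all $\tau\in[0,\tau_f]$ (persistent contact). Then: (i) the convex multipliers $\theta_1,\theta_2\ge 0$ in the representation $y'=\theta_1 f_1(y,u)+\theta_2 f_2(y)$, $\theta_1+\theta_2=1$, are unique; (ii) the dynamics of the sliding mode are given by $y'=\gamma(x,u)\,(f_{\mathrm{DAE}}(x,u),1)$, where $\gamma(x,u)\in(0,1]$ is the time-rescaling factor $$\gamma(x,u):=\frac{D(q)a_{\mathrm{n}}}{D(q)a_{\mathrm{n}}-\varphi(x,u)}.$$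
   Context: Let $f_v:\mathbb{R}^{n_q}\times\mathbb{R}^{n_q}\times\mathbb{R}^{n_u}\to\mathbb{R}^{n_q}$, $M:\mathbb{R}^{n_q}\to\mathbb{R}^{n_q\times n_q}$ and $f_c:\mathbb{R}^{n_q}\to\mathbb{R}$ be at least twice continuously differentiable, with $M(q)$ symmetric positive definite. Let $x=(q,v)\in\mathbb{R}^{2n_q}$, $n(q):=\nabla_q f_c(q)$, $D(q):=n(q)^\top M(q)^{-1}n(q)$ (so $D(q)>0$ when $n(q)\neq0$), $\varphi(x,u):=n(q)^\top f_v(q,v,u)+\nabla_q\big(n(q)^\top v\big)^\top v$, $f_{\mathrm{ODE}}(x,u):=(v,f_v(q,v,u))$ and $f_{\mathrm{DAE}}(x,u):=\big(v,\ f_v(q,v,u)-M(q)^{-1}n(q)D(q)^{-1}\varphi(x,u)\big)$. The time-freezing state is $y=(x,t)\in\mathbb{R}^{n_y}$, $n_y=2n_q+1$, where $t$ is a clock state, evolving in numerical time $\tau$ with $y'=\mathrm{d}y/\mathrm{d}\tau$, and $u(\tau)\in\mathbb{R}^{n_u}$ is a given control function. Switching functions: $c_1(y)=f_c(q)$, $c_2(y)=n(q)^\top v$. Regions: $R_1=\{y: c_1(y)>0\}\cup\{y: c_1(y)<0,\ c_2(y)>0\}$, $R_2=\{y: c_1(y)<0,\ c_2(y)<0\}$. Vector fields: $f_1(y,u)=(f_{\mathrm{ODE}}(x,u),1)$ and $f_2(y)=f_{\mathrm{aux,n}}(y):=(\mathbf{0}_{n_q,1},\ M(q)^{-1}n(q)a_{\mathrm{n}},\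 0)$ with a constant $a_{\mathrm{n}}>0$. The time-freezing system is the Filippov differential inclusion $$y'\in F_{\mathrm{TF}}(y,u):=\{\theta_1 f_1(y,u)+\theta_2 f_2(y)\mid \theta_1+\theta_2=1,\ \theta\ge0,\ \theta_i=0 \text{ if } y\notin\overline{R_i},\ i=1,2\}.$$ Define $\Sigma:=\{y\in\mathbb{R}^{n_y}\mid f_c(q)=0,\ n(q)^\top v=0\}$. A sliding mode is an evolution of $y$ on $\Sigma$. *)

theory Defs
  imports "HOL-Analysis.Analysis"
begin

definition C1_fun :: "('a::real_normed_vector \<Rightarrow> 'b::real_normed_vector) \<Rightarrow> bool" where
  "C1_fun f \<longleftrightarrow> (\<exists>f' :: 'a \<Rightarrow> ('a \<Rightarrow>\<^sub>L 'b).
      (\<forall>x. (f has_derivative blinfun_apply (f' x)) (at x)) \<and> continuous_on UNIV f')"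

definition C2_fun :: "('a::real_normed_vector \<Rightarrow> 'b::real_normed_vector) \<Rightarrow> bool" where
  "C2_fun f \<longleftrightarrow> (\<exists>f' :: 'a \<Rightarrow> ('a \<Rightarrow>\<^sub>L 'b).
      (\<forall>x. (f has_derivative blinfun_apply (f' x)) (at x)) \<and> C1_fun f')"

definition sym_pos_def :: "real^'n^'n \<Rightarrow> bool" where
  "sym_pos_def A \<longleftrightarrow> transpose A = A \<and> (\<forall>z. z \<noteq> 0 \<longrightarrow> z \<bullet> (A *v z) > 0)"

definition abs_continuous_on :: "real \<Rightarrow> real \<Rightarrow> (real \<Rightarrow> 'a::real_normed_vector) \<Rightarrow> bool" where
  "abs_continuous_on a b y \<longleftrightarrow>
     (\<forall>\<epsilon>>0. \<exists>\<delta>>0. \<forall>(m::nat) (s::nat \<Rightarrow> real) (t::nat \<Rightarrow> real).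
        (\<forall>i<m. a \<le> s i \<and> s i \<le> t i \<and> t i \<le> b) \<and>
        (\<forall>i<m. \<forall>j<m. i \<noteq> j \<longrightarrow> t i \<le> s j \<or> t j \<le> s i) \<and>
        (\<Sum>i<m. t i - s i) < \<delta>
        \<longrightarrow> (\<Sum>i<m. norm (y (t i) - y (s i))) < \<epsilon>)"

definition gradient :: "(real^'n \<Rightarrow> real) \<Rightarrow> real^'n \<Rightarrow> real^'n" where
  "gradient f q = (\<chi> i. frechet_derivative f (at q) (axis i 1))"

definition nvec :: "(real^'n \<Rightarrow> real) \<Rightarrow> real^'n \<Rightarrow> real^'n" where
  "nvec fc q = gradient fc q"

definition Dq :: "(real^'n \<Rightarrow> real^'n^'n) \<Rightarrow> (real^'n \<Rightarrow> real) \<Rightarrow> real^'n \<Rightarrow> real" where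
  "Dq M fc q = nvec fc q \<bullet> (matrix_inv (M q) *v nvec fc q)"

text \<open>phi(x,u) = n(q)^T f_v(q,v,u) + grad_q(n(q)^T v)^T v; the second term is the
  directional derivative of q' |-> n(q')^T v at q in direction v.\<close>
definition phi :: "(real^'n \<Rightarrow> real^'n \<Rightarrow> real^'m \<Rightarrow> real^'n) \<Rightarrow> (real^'n \<Rightarrow> real)
    \<Rightarrow> real^'n \<Rightarrow> real^'n \<Rightarrow> real^'m \<Rightarrow> real" where
  "phi fv fc q v u = nvec fc q \<bullet> fv q v u
     + frechet_derivative (\<lambda>p. nvec fc p \<bullet> v) (at q) v"

definition fDAE_v :: "(real^'n \<Rightarrow> real^'n \<Rightarrow> real^'m \<Rightarrow> real^'n) \<Rightarrow> (real^'n \<Rightarrow> real^'n^'n)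
    \<Rightarrow> (real^'n \<Rightarrow> real) \<Rightarrow> real^'n \<Rightarrow> real^'n \<Rightarrow> real^'m \<Rightarrow> real^'n" where
  "fDAE_v fv M fc q v u = fv q v u
     - (phi fv fc q v u / Dq M fc q) *\<^sub>R (matrix_inv (M q) *v nvec fc q)"

definition fDAE :: "(real^'n \<Rightarrow> real^'n \<Rightarrow> real^'m \<Rightarrow> real^'n) \<Rightarrow> (real^'n \<Rightarrow> real^'n^'n)
    \<Rightarrow> (real^'n \<Rightarrow> real) \<Rightarrow> real^'n \<Rightarrow> real^'n \<Rightarrow> real^'m \<Rightarrow> (real^'n) \<times> (real^'n)" where
  "fDAE fv M fc q v u = (v, fDAE_v fv M fc q v u)"

definition gamma :: "(real^'n \<Rightarrow> real^'n \<Rightarrow> real^'m \<Rightarrow> real^'n) \<Rightarrow> (real^'n \<Rightarrow> real^'n^'n)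
    \<Rightarrow> (real^'n \<Rightarrow> real) \<Rightarrow> real \<Rightarrow> real^'n \<Rightarrow> real^'n \<Rightarrow> real^'m \<Rightarrow> real" where
  "gamma fv M fc an q v u = Dq M fc q * an / (Dq M fc q * an - phi fv fc q v u)"

section \<open>Time-freezing system; state y = (q, v, t)\<close>

definition c1 :: "(real^'n \<Rightarrow> real) \<Rightarrow> (real^'n) \<times> (real^'n) \<times> real \<Rightarrow> real" where
  "c1 fc y = fc (fst y)"

definition c2 :: "(real^'n \<Rightarrow> real) \<Rightarrow> (real^'n) \<times> (real^'n) \<times> real \<Rightarrow> real" where
  "c2 fc y = nvec fc (fst y) \<bullet> fst (snd y)"

definition R1 :: "(real^'n \<Rightarrow> real) \<Rightarrow> ((real^'n) \<times> (real^'n) \<times> real) set" where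
  "R1 fc = {y. c1 fc y > 0} \<union> {y. c1 fc y < 0 \<and> c2 fc y > 0}"

definition R2 :: "(real^'n \<Rightarrow> real) \<Rightarrow> ((real^'n) \<times> (real^'n) \<times> real) set" where
  "R2 fc = {y. c1 fc y < 0 \<and> c2 fc y < 0}"

definition f1 :: "(real^'n \<Rightarrow> real^'n \<Rightarrow> real^'m \<Rightarrow> real^'n)
    \<Rightarrow> (real^'n) \<times> (real^'n) \<times> real \<Rightarrow> real^'m \<Rightarrow> (real^'n) \<times> (real^'n) \<times> real" where
  "f1 fv y u = (fst (snd y), fv (fst y) (fst (snd y)) u, 1)"

definition f2 :: "(real^'n \<Rightarrow> real^'n^'n) \<Rightarrow> (real^'n \<Rightarrow> real) \<Rightarrow> real
    \<Rightarrow> (real^'n) \<times> (real^'n) \<times> real \<Rightarrow> (real^'n) \<times> (real^'n) \<times> real" where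
  "f2 M fc an y = (0, an *\<^sub>R (matrix_inv (M (fst y)) *v nvec fc (fst y)), 0)"

definition TF_mult :: "(real^'n \<Rightarrow> real) \<Rightarrow> (real^'n) \<times> (real^'n) \<times> real \<Rightarrow> real \<times> real \<Rightarrow> bool" where
  "TF_mult fc y \<theta> \<longleftrightarrow> fst \<theta> \<ge> 0 \<and> snd \<theta> \<ge> 0 \<and> fst \<theta> + snd \<theta> = 1
     \<and> (y \<notin> closure (R1 fc) \<longrightarrow> fst \<theta> = 0) \<and> (y \<notin> closure (R2 fc) \<longrightarrow> snd \<theta> = 0)"

definition F_TF :: "(real^'n \<Rightarrow> real^'n \<Rightarrow> real^'m \<Rightarrow> real^'n) \<Rightarrow> (real^'n \<Rightarrow> real^'n^'n)
    \<Rightarrow> (real^'n \<Rightarrow> real) \<Rightarrow> real \<Rightarrow> (real^'n) \<times> (real^'n) \<times> real \<Rightarrow> real^'m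
    \<Rightarrow> ((real^'n) \<times> (real^'n) \<times> real) set" where
  "F_TF fv M fc an y u =
     {fst \<theta> *\<^sub>R f1 fv y u + snd \<theta> *\<^sub>R f2 M fc an y | \<theta>. TF_mult fc y \<theta>}"

definition Sigma_set :: "(real^'n \<Rightarrow> real) \<Rightarrow> ((real^'n) \<times> (real^'n) \<times> real) set" where
  "Sigma_set fc = {y. fc (fst y) = 0 \<and> nvec fc (fst y) \<bullet> fst (snd y) = 0}"

definition TF_solution :: "(real^'n \<Rightarrow> real^'n \<Rightarrow> real^'m \<Rightarrow> real^'n) \<Rightarrow> (real^'n \<Rightarrow> real^'n^'n)
    \<Rightarrow> (real^'n \<Rightarrow> real) \<Rightarrow> real \<Rightarrow> (real \<Rightarrow> real^'m) \<Rightarrow> real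
    \<Rightarrow> (real \<Rightarrow> (real^'n) \<times> (real^'n) \<times> real) \<Rightarrow> bool" where
  "TF_solution fv M fc an u tf y \<longleftrightarrow>
     abs_continuous_on 0 tf y \<and>
     (AE \<tau> in lborel. \<tau> \<in> {0..tf} \<longrightarrow>
        (\<exists>d. (y has_vector_derivative d) (at \<tau> within {0..tf}) \<and> d \<in> F_TF fv M fc an (y \<tau>) (u \<tau>)))"

end

theory Submission
  imports Defs
begin

(* Along a Filippov solution the switching functions c1 = fc(q) and c2 = n(q)^T v are
   absolutely continuous, and almost everywhere c1' = theta1 c2 and
   c2' = theta1 phi + theta2 an D, where theta2 > 0 only on the closure of R2 (c1, c2 <= 0)
   and theta1 > 0 only on the closure of R1 (c1 >= 0 or c2 >= 0).  Comparison arguments for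
   absolutely continuous functions then give, in turn, c2 <= 0 (as phi <= 0), c1 = 0, and
   c2 >= 0 (once c1 = 0 we have theta1 c2 = 0, so c2 < 0 forces c2' = an D > 0): the solution
   stays on Sigma.  Hence c2' = 0 a.e., i.e. theta1 phi + theta2 an D = 0, which with
   theta1 + theta2 = 1 gives theta1 = gamma; since the clock component of y' is theta1, the
   multipliers are unique, and substituting them gives y' = gamma (f_DAE, 1). *)

lemma abs_continuous_on_finite_family:
  fixes g :: "real \<Rightarrow> 'a::real_normed_vector"
  assumes "abs_continuous_on a b g" "e > 0"
  shows "\<exists>\<delta>>0. \<forall>(I :: 'i set) s t. finite I \<and> (\<forall>i\<in>I. a \<le> s i \<and> s i \<le> t i \<and> t i \<le> b) \<and>
       (\<forall>i\<in>I. \<forall>j\<in>I. i \<noteq> j \<longrightarrow> t i \<le> s j \<or> t j \<le> s i) \<and>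
       (\<Sum>i\<in>I. t i - s i) < \<delta> \<longrightarrow> (\<Sum>i\<in>I. norm (g (t i) - g (s i))) < e"
proof -
  obtain \<delta> where "\<delta> > 0" and ac: "\<forall>(m::nat) (s::nat \<Rightarrow> real) t.
        (\<forall>i<m. a \<le> s i \<and> s i \<le> t i \<and> t i \<le> b) \<and>
        (\<forall>i<m. \<forall>j<m. i \<noteq> j \<longrightarrow> t i \<le> s j \<or> t j \<le> s i) \<and>
        (\<Sum>i<m. t i - s i) < \<delta> \<longrightarrow> (\<Sum>i<m. norm (g (t i) - g (s i))) < e"
    using assms(1)[unfolded abs_continuous_on_def, rule_format, OF assms(2)] by blast
  have "(\<Sum>i\<in>I. norm (g (t i) - g (s i))) < e"
    if "finite I" and within: "\<forall>i\<in>I. a \<le> s i \<and> s i \<le> t i \<and> t i \<le> b"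
      and disjoint: "\<forall>i\<in>I. \<forall>j\<in>I. i \<noteq> j \<longrightarrow> t i \<le> s j \<or> t j \<le> s i"
      and small: "(\<Sum>i\<in>I. t i - s i) < \<delta>"
    for I :: "'i set" and s t
  proof -
    obtain h where h: "bij_betw h {..<card I} I"
      using ex_bij_betw_nat_finite[OF \<open>finite I\<close>] by (metis atLeast0LessThan)
    then have h_in: "k < card I \<Longrightarrow> h k \<in> I" and h_inj: "inj_on h {..<card I}" for k
      by (auto simp: bij_betw_def)
    have "(\<Sum>k<card I. norm (g (t (h k)) - g (s (h k)))) < e"
    proof (rule ac[rule_format], intro conjI allI impI)
      show "(\<Sum>k<card I. t (h k) - s (h k)) < \<delta>"
        using small sum.reindex_bij_betw[OF h, of "\<lambda>i. t i - s i"] by simp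
    next
      fix k assume "k < card I"
      then show "a \<le> s (h k)" "s (h k) \<le> t (h k)" "t (h k) \<le> b" using within h_in by auto
    next
      fix k l assume "k < card I" "l < card I" "k \<noteq> l"
      then have "h k \<in> I" "h l \<in> I" "h k \<noteq> h l" using h_in h_inj by (auto simp: inj_on_eq_iff)
      then show "t (h k) \<le> s (h l) \<or> t (h l) \<le> s (h k)" using disjoint by blast
    qed
    then show ?thesis
      using sum.reindex_bij_betw[OF h, of "\<lambda>i. norm (g (t i) - g (s i))"] by simp
  qed
  with \<open>\<delta> > 0\<close> show ?thesis by blast
qed

lemma abs_continuous_on_dominated:
  fixes g :: "real \<Rightarrow> 'a::real_normed_vector" and h :: "real \<Rightarrow> 'b::real_normed_vector"
  assumes "abs_continuous_on a b g" "a \<le> c" "d \<le> b" "0 \<le> B"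
    and dom: "\<And>s t. c \<le> s \<Longrightarrow> s \<le> t \<Longrightarrow> t \<le> d \<Longrightarrow> norm (h t - h s) \<le> B * norm (g t - g s)"
  shows "abs_continuous_on c d h"
  unfolding abs_continuous_on_def
proof (intro allI impI)
  fix e :: real assume "e > 0"
  with \<open>0 \<le> B\<close> have "e / (B + 1) > 0" by simp
  from assms(1)[unfolded abs_continuous_on_def, rule_format, OF this] obtain \<delta> where "\<delta> > 0" and
    ac: "\<forall>(m::nat) (s::nat \<Rightarrow> real) t. (\<forall>i<m. a \<le> s i \<and> s i \<le> t i \<and> t i \<le> b) \<and>
        (\<forall>i<m. \<forall>j<m. i \<noteq> j \<longrightarrow> t i \<le> s j \<or> t j \<le> s i) \<and>
        (\<Sum>i<m. t i - s i) < \<delta> \<longrightarrow> (\<Sum>i<m. norm (g (t i) - g (s i))) < e / (B + 1)" by blast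
  show "\<exists>\<delta>>0. \<forall>(m::nat) (s::nat \<Rightarrow> real) t. (\<forall>i<m. c \<le> s i \<and> s i \<le> t i \<and> t i \<le> d) \<and>
        (\<forall>i<m. \<forall>j<m. i \<noteq> j \<longrightarrow> t i \<le> s j \<or> t j \<le> s i) \<and>
        (\<Sum>i<m. t i - s i) < \<delta> \<longrightarrow> (\<Sum>i<m. norm (h (t i) - h (s i))) < e"
  proof (intro exI[of _ \<delta>] conjI allI impI)
    fix m :: nat and s t :: "nat \<Rightarrow> real"
    assume st: "(\<forall>i<m. c \<le> s i \<and> s i \<le> t i \<and> t i \<le> d) \<and>
        (\<forall>i<m. \<forall>j<m. i \<noteq> j \<longrightarrow> t i \<le> s j \<or> t j \<le> s i) \<and> (\<Sum>i<m. t i - s i) < \<delta>"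
    then have "\<forall>i<m. a \<le> s i \<and> s i \<le> t i \<and> t i \<le> b" using assms(2,3) by force
    with ac st have small: "(\<Sum>i<m. norm (g (t i) - g (s i))) < e / (B + 1)" by blast
    have "(\<Sum>i<m. norm (h (t i) - h (s i))) \<le> (\<Sum>i<m. B * norm (g (t i) - g (s i)))"
      using st by (intro sum_mono dom) auto
    also have "\<dots> \<le> (B + 1) * (\<Sum>i<m. norm (g (t i) - g (s i)))"
      by (simp add: sum_distrib_left[symmetric] mult_right_mono sum_nonneg)
    also have "\<dots> < (B + 1) * (e / (B + 1))"
      using small \<open>0 \<le> B\<close> by (intro mult_strict_left_mono) auto
    also have "\<dots> = e" using \<open>0 \<le> B\<close> by simp
    finally show "(\<Sum>i<m. norm (h (t i) - h (s i))) < e" .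
  qed (fact \<open>\<delta> > 0\<close>)
qed

lemma abs_continuous_on_subinterval:
  assumes "abs_continuous_on a b g" "a \<le> c" "d \<le> b"
  shows "abs_continuous_on c d g"
  by (rule abs_continuous_on_dominated[OF assms, where B = 1]) simp_all

lemma abs_continuous_on_uminus:
  fixes g :: "real \<Rightarrow> 'a::real_normed_vector"
  assumes "abs_continuous_on a b g"
  shows "abs_continuous_on a b (\<lambda>x. - g x)"
  by (rule abs_continuous_on_dominated[OF assms order_refl order_refl, where B = 1])
    (simp_all add: norm_minus_commute)

lemma abs_continuous_on_imp_continuous_on:
  fixes g :: "real \<Rightarrow> 'a::real_normed_vector"
  assumes "abs_continuous_on a b g"
  shows "continuous_on {a..b} g"
  unfolding continuous_on_iff
proof (intro ballI allI impI)
  fix x e :: real assume x: "x \<in> {a..b}" and "e > 0"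
  from assms[unfolded abs_continuous_on_def, rule_format, OF this(2)] obtain \<delta> where "\<delta> > 0" and
    ac: "\<forall>(m::nat) (s::nat \<Rightarrow> real) t. (\<forall>i<m. a \<le> s i \<and> s i \<le> t i \<and> t i \<le> b) \<and>
        (\<forall>i<m. \<forall>j<m. i \<noteq> j \<longrightarrow> t i \<le> s j \<or> t j \<le> s i) \<and>
        (\<Sum>i<m. t i - s i) < \<delta> \<longrightarrow> (\<Sum>i<m. norm (g (t i) - g (s i))) < e" by blast
  have "dist (g x') (g x) < e" if x': "x' \<in> {a..b}" "dist x' x < \<delta>" for x'
  proof -
    have "max x x' - min x x' < \<delta>" using x' by (auto simp: dist_real_def)
    then have "norm (g (max x x') - g (min x x')) < e"
      using ac[rule_format, of 1 "\<lambda>_. min x x'" "\<lambda>_. max x x'"] x x' by auto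
    then show ?thesis by (cases "x \<le> x'") (auto simp: dist_norm norm_minus_commute)
  qed
  with \<open>\<delta> > 0\<close> show "\<exists>\<delta>>0. \<forall>x'\<in>{a..b}. dist x' x < \<delta> \<longrightarrow> dist (g x') (g x) < e" by blast
qed

lemma abs_continuous_on_compose_lipschitz:
  fixes y :: "real \<Rightarrow> 'a::real_normed_vector" and G :: "'a \<Rightarrow> 'b::real_normed_vector"
  assumes "abs_continuous_on a b y" "B-lipschitz_on (y ` {a..b}) G"
  shows "abs_continuous_on a b (\<lambda>t. G (y t))"
  by (rule abs_continuous_on_dominated[OF assms(1) order_refl order_refl lipschitz_on_nonneg[OF assms(2)]])
    (auto intro!: lipschitz_on_normD[OF assms(2)])

lemma lipschitz_on_bounded_if_derivative_bound:
  fixes G :: "'a::euclidean_space \<Rightarrow> 'b::real_normed_vector"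
  assumes "bounded S" and G': "\<And>z. (G has_derivative G' z) (at z)"
    and \<beta>: "\<And>z h. norm (G' z h) \<le> \<beta> z * norm h" "continuous_on UNIV \<beta>"
  obtains B where "B-lipschitz_on S G"
proof -
  obtain R where "\<forall>z\<in>S. norm z \<le> R" using assms(1) bounded_iff by blast
  then have S: "S \<subseteq> cball 0 R" by auto
  have "compact (\<beta> ` cball 0 R)"
    by (intro compact_continuous_image continuous_on_subset[OF \<beta>(2)]) auto
  then obtain B0 where "\<forall>r\<in>\<beta> ` cball 0 R. norm r \<le> B0" using compact_imp_bounded bounded_iff by blast
  then have B0: "\<beta> z \<le> B0" if "z \<in> cball 0 R" for z using that by force
  define B where "B = max B0 0"
  have onorm_G': "onorm (G' z) \<le> B" if "z \<in> cball 0 R" for z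
  proof (rule onorm_le)
    fix h :: 'a
    have "\<beta> z * norm h \<le> B * norm h" using B0[OF that] by (simp add: B_def mult_right_mono)
    then show "norm (G' z h) \<le> B * norm h" using \<beta>(1)[of z h] by linarith
  qed
  have "norm (G z - G w) \<le> B * norm (z - w)" if "z \<in> cball 0 R" "w \<in> cball 0 R" for z w
    by (rule differentiable_bound[OF convex_cball _ onorm_G' that]) (rule has_derivative_at_withinI[OF G'])
  then have "B-lipschitz_on (cball 0 R) G"
    by (intro lipschitz_onI) (auto simp: B_def dist_norm)
  then show ?thesis using S by (blast intro: that lipschitz_on_subset)
qed

lemma abs_continuous_on_compose_derivative_bound:
  fixes y :: "real \<Rightarrow> 'a::euclidean_space" and G :: "'a \<Rightarrow> 'b::real_normed_vector"
  assumes "abs_continuous_on a b y" "\<And>z. (G has_derivative G' z) (at z)"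
    "\<And>z h. norm (G' z h) \<le> \<beta> z * norm h" "continuous_on UNIV \<beta>"
  shows "abs_continuous_on a b (\<lambda>t. G (y t))"
proof -
  have "compact (y ` {a..b})"
    by (intro compact_continuous_image abs_continuous_on_imp_continuous_on assms(1)) auto
  then obtain B where "B-lipschitz_on (y ` {a..b}) G"
    using lipschitz_on_bounded_if_derivative_bound[OF compact_imp_bounded assms(2-4)] by blast
  then show ?thesis by (rule abs_continuous_on_compose_lipschitz[OF assms(1)])
qed

lemma tagged_division_of_real_elem:
  fixes a b :: real
  assumes "D tagged_division_of {a..b}" "(x, K) \<in> D"
  shows "\<exists>u v. K = {u..v} \<and> a \<le> u \<and> u \<le> x \<and> x \<le> v \<and> v \<le> b"
proof -
  from tagged_division_ofD(2-4)[OF assms] obtain u v where "x \<in> K" "K \<subseteq> {a..b}" "K = cbox u v"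
    by blast
  then show ?thesis by (auto simp: box_real)
qed

lemma tagged_division_of_real_disjoint:
  fixes a b :: real
  assumes D: "D tagged_division_of {a..b}" and "(x, K) \<in> D" "(x', K') \<in> D" "(x, K) \<noteq> (x', K')"
    and "Inf K < Sup K" "Inf K' < Sup K'"
  shows "Sup K \<le> Inf K' \<or> Sup K' \<le> Inf K"
proof (rule ccontr)
  obtain u v where K: "K = {u..v}" "u \<le> v"
    using tagged_division_of_real_elem[OF D assms(2)] by force
  obtain u' v' where K': "K' = {u'..v'}" "u' \<le> v'"
    using tagged_division_of_real_elem[OF D assms(3)] by force
  assume "\<not> ?thesis"
  with K K' assms(5,6) have "(max u u' + min v v') / 2 \<in> interior K \<inter> interior K'"
    by auto
  moreover have "interior K \<inter> interior K' = {}"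
    using tagged_division_ofD(5)[OF D assms(2-4)] .
  ultimately show False by blast
qed

lemma tagged_division_of_real_sum_nondegenerate:
  fixes a b :: real and f :: "real \<Rightarrow> real \<Rightarrow> 'a::comm_monoid_add"
  assumes D: "D tagged_division_of {a..b}" and "D' \<subseteq> D" and "\<And>u. f u u = 0"
  shows "(\<Sum>(x,K)\<in>D'. f (Inf K) (Sup K)) = (\<Sum>p\<in>{p\<in>D'. Inf (snd p) < Sup (snd p)}. f (Inf (snd p)) (Sup (snd p)))"
proof -
  have "finite D'" using D \<open>D' \<subseteq> D\<close> finite_subset by blast
  have "(\<Sum>(x,K)\<in>D'. f (Inf K) (Sup K)) = (\<Sum>p\<in>D'. f (Inf (snd p)) (Sup (snd p)))"
    by (simp add: case_prod_beta)
  also have "\<dots> = (\<Sum>p\<in>{p\<in>D'. Inf (snd p) < Sup (snd p)}. f (Inf (snd p)) (Sup (snd p)))"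
  proof (rule sum.mono_neutral_right[OF \<open>finite D'\<close>])
    show "\<forall>p\<in>D' - {p\<in>D'. Inf (snd p) < Sup (snd p)}. f (Inf (snd p)) (Sup (snd p)) = 0"
    proof
      fix p assume p: "p \<in> D' - {p\<in>D'. Inf (snd p) < Sup (snd p)}"
      obtain u v where "snd p = {u..v}" "u \<le> v"
        using tagged_division_of_real_elem[OF D, of "fst p" "snd p"] p \<open>D' \<subseteq> D\<close> by force
      with p show "f (Inf (snd p)) (Sup (snd p)) = 0" using assms(3) by auto
    qed
  qed auto
  finally show ?thesis .
qed

(* Degenerate intervals of a division may lie inside other intervals, so they are discarded
   before the definition of absolute continuity is applied. *)
lemma abs_continuous_on_tagged_division:
  fixes g :: "real \<Rightarrow> 'a::real_normed_vector"
  assumes "abs_continuous_on a b g" "e > 0"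
  shows "\<exists>\<delta>>0. \<forall>D D'. D tagged_division_of {a..b} \<and> D' \<subseteq> D \<and> (\<Sum>(x,K)\<in>D'. Sup K - Inf K) < \<delta>
           \<longrightarrow> (\<Sum>(x,K)\<in>D'. norm (g (Sup K) - g (Inf K))) < e"
proof -
  obtain \<delta> where "\<delta> > 0" and ac: "\<forall>(I :: (real \<times> real set) set) s t. finite I \<and>
       (\<forall>i\<in>I. a \<le> s i \<and> s i \<le> t i \<and> t i \<le> b) \<and>
       (\<forall>i\<in>I. \<forall>j\<in>I. i \<noteq> j \<longrightarrow> t i \<le> s j \<or> t j \<le> s i) \<and>
       (\<Sum>i\<in>I. t i - s i) < \<delta> \<longrightarrow> (\<Sum>i\<in>I. norm (g (t i) - g (s i))) < e"
    using abs_continuous_on_finite_family[OF assms] by blast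
  have "(\<Sum>(x,K)\<in>D'. norm (g (Sup K) - g (Inf K))) < e"
    if D: "D tagged_division_of {a..b}" and "D' \<subseteq> D" and small: "(\<Sum>(x,K)\<in>D'. Sup K - Inf K) < \<delta>"
    for D D'
  proof -
    define D'' where "D'' = {p\<in>D'. Inf (snd p) < Sup (snd p)}"
    have "finite D'" using D \<open>D' \<subseteq> D\<close> finite_subset by blast
    then have "finite D''" by (simp add: D''_def)
    have "(\<Sum>(x,K)\<in>D'. norm (g (Sup K) - g (Inf K))) = (\<Sum>p\<in>D''. norm (g (Sup (snd p)) - g (Inf (snd p))))"
      using tagged_division_of_real_sum_nondegenerate[OF D \<open>D' \<subseteq> D\<close>, where f = "\<lambda>u v. norm (g v - g u)"]
      by (simp add: D''_def)
    also have "\<dots> < e"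
    proof (rule ac[rule_format], intro conjI ballI impI)
      show "finite D''" by fact
    next
      fix p assume "p \<in> D''"
      then show "a \<le> Inf (snd p)" "Inf (snd p) \<le> Sup (snd p)" "Sup (snd p) \<le> b"
        using tagged_division_of_real_elem[OF D, of "fst p" "snd p"] \<open>D' \<subseteq> D\<close> by (force simp: D''_def)+
    next
      fix p p' assume "p \<in> D''" "p' \<in> D''" "p \<noteq> p'"
      then show "Sup (snd p) \<le> Inf (snd p') \<or> Sup (snd p') \<le> Inf (snd p)"
        using tagged_division_of_real_disjoint[OF D, of "fst p" "snd p" "fst p'" "snd p'"] \<open>D' \<subseteq> D\<close>
        by (auto simp: D''_def)
    next
      show "(\<Sum>p\<in>D''. Sup (snd p) - Inf (snd p)) < \<delta>"
        using small tagged_division_of_real_sum_nondegenerate[OF D \<open>D' \<subseteq> D\<close>, where f = "\<lambda>u v. v - u"]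
        by (simp add: D''_def)
    qed
    finally show ?thesis .
  qed
  with \<open>\<delta> > 0\<close> show ?thesis by blast
qed

(* The intervals tagged in N have total length at most the Riemann sum of the indicator of N,
   which is small on fine divisions because N is negligible. *)
lemma abs_continuous_on_negligible_tags:
  fixes g :: "real \<Rightarrow> 'a::real_normed_vector"
  assumes "abs_continuous_on a b g" "negligible N" "e > 0"
  obtains \<gamma> where "gauge \<gamma>"
    "\<And>D. D tagged_division_of {a..b} \<Longrightarrow> \<gamma> fine D \<Longrightarrow>
       (\<Sum>(x,K)\<in>{p\<in>D. fst p \<in> N}. norm (g (Sup K) - g (Inf K))) < e"
proof -
  obtain \<delta> where "\<delta> > 0" and ac: "\<forall>D D'. D tagged_division_of {a..b} \<and> D' \<subseteq> D \<and>
      (\<Sum>(x,K)\<in>D'. Sup K - Inf K) < \<delta> \<longrightarrow> (\<Sum>(x,K)\<in>D'. norm (g (Sup K) - g (Inf K))) < e"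
    using abs_continuous_on_tagged_division[OF assms(1,3)] by blast
  have "(indicat_real N has_integral 0) (cbox a b)"
    using assms(2) unfolding negligible_def by blast
  then obtain \<gamma> where "gauge \<gamma>" and \<gamma>: "\<And>D. D tagged_division_of cbox a b \<Longrightarrow> \<gamma> fine D \<Longrightarrow>
      norm ((\<Sum>(x,K)\<in>D. measure lborel K *\<^sub>R indicat_real N x) - 0) < \<delta>"
    using \<open>\<delta> > 0\<close> unfolding has_integral by meson
  show ?thesis
  proof (rule that[OF \<open>gauge \<gamma>\<close>])
    fix D assume D: "D tagged_division_of {a..b}" and "\<gamma> fine D"
    have "finite D" using D by blast
    have "(\<Sum>(x,K)\<in>{p\<in>D. fst p \<in> N}. Sup K - Inf K)
        = (\<Sum>(x,K)\<in>{p\<in>D. fst p \<in> N}. measure lborel K *\<^sub>R indicat_real N x)"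
    proof (rule sum.cong[OF refl])
      fix p assume "p \<in> {p\<in>D. fst p \<in> N}"
      then obtain x K where p: "p = (x, K)" "(x, K) \<in> D" "x \<in> N" by (cases p) auto
      then obtain u v where "K = {u..v}" "u \<le> v" using tagged_division_of_real_elem[OF D] by force
      with p show "(case p of (x, K) \<Rightarrow> Sup K - Inf K)
          = (case p of (x, K) \<Rightarrow> measure lborel K *\<^sub>R indicat_real N x)" by simp
    qed
    also have "\<dots> \<le> (\<Sum>(x,K)\<in>D. measure lborel K *\<^sub>R indicat_real N x)"
      by (rule sum_mono2[OF \<open>finite D\<close>]) auto
    also have "\<dots> < \<delta>" using \<gamma>[OF D[folded box_real(2)] \<open>\<gamma> fine D\<close>] by simp
    finally have "(\<Sum>(x,K)\<in>{p\<in>D. fst p \<in> N}. Sup K - Inf K) < \<delta>" .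
    then show "(\<Sum>(x,K)\<in>{p\<in>D. fst p \<in> N}. norm (g (Sup K) - g (Inf K))) < e"
      using ac[rule_format, of D "{p\<in>D. fst p \<in> N}"] D by blast
  qed
qed

lemma nonneg_derivative_gauge:
  fixes g :: "real \<Rightarrow> real"
  assumes deriv: "\<And>x. x \<in> S \<Longrightarrow> \<exists>d\<ge>0. (g has_real_derivative d) (at x)" and "e > 0"
  obtains \<gamma> where "gauge \<gamma>"
    "\<And>x u v. x \<in> S \<Longrightarrow> u \<le> x \<Longrightarrow> x \<le> v \<Longrightarrow> {u..v} \<subseteq> \<gamma> x \<Longrightarrow> - e * (v - u) \<le> g v - g u"
proof -
  have "\<exists>r>0. \<forall>u v. u \<le> x \<longrightarrow> x \<le> v \<longrightarrow> {u..v} \<subseteq> ball x r \<longrightarrow> - e * (v - u) \<le> g v - g u"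
    if x: "x \<in> S" for x
  proof -
    obtain d where "d \<ge> 0" and "(g has_derivative (\<lambda>h. d * h)) (at x)"
      using deriv[OF x] by (auto simp: has_field_derivative_def)
    then obtain r where "r > 0" and
      r: "\<And>y. norm (y - x) < r \<Longrightarrow> norm (g y - g x - d * (y - x)) \<le> e * norm (y - x)"
      using \<open>e > 0\<close> unfolding has_derivative_at_alt by blast
    have "- e * (v - u) \<le> g v - g u" if "u \<le> x" "x \<le> v" "{u..v} \<subseteq> ball x r" for u v
    proof -
      have "u \<in> {u..v}" "v \<in> {u..v}" using that(1,2) by auto
      then have "u \<in> ball x r" "v \<in> ball x r" using that(3) by blast+
      then have "\<bar>g u - g x - d * (u - x)\<bar> \<le> e * (x - u)" "\<bar>g v - g x - d * (v - x)\<bar> \<le> e * (v - x)"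
        using r[of u] r[of v] that(1,2) by (auto simp: dist_real_def)
      moreover have "0 \<le> d * (x - u)" "0 \<le> d * (v - x)" using \<open>d \<ge> 0\<close> that(1,2) by simp_all
      ultimately show ?thesis by (simp add: abs_le_iff algebra_simps)
    qed
    with \<open>r > 0\<close> show ?thesis by blast
  qed
  then have "\<forall>x\<in>S. \<exists>r. r > 0 \<and>
      (\<forall>u v. u \<le> x \<longrightarrow> x \<le> v \<longrightarrow> {u..v} \<subseteq> ball x r \<longrightarrow> - e * (v - u) \<le> g v - g u)"
    by blast
  from bchoice[OF this] obtain r where r: "\<forall>x\<in>S. r x > 0 \<and>
      (\<forall>u v. u \<le> x \<longrightarrow> x \<le> v \<longrightarrow> {u..v} \<subseteq> ball x (r x) \<longrightarrow> - e * (v - u) \<le> g v - g u)"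
    by blast
  show ?thesis
  proof (rule that)
    show "gauge (\<lambda>x. ball x (if x \<in> S then r x else 1))"
      using r by (intro gauge_ball_dependent) simp
  qed (use r in auto)
qed

lemma tagged_division_increment_lower_bound:
  fixes g :: "real \<Rightarrow> real" and a b :: real
  assumes "a \<le> b" and D: "D tagged_division_of {a..b}" and "0 \<le> e"
    and bad: "(\<Sum>(x,K)\<in>{p\<in>D. P p}. norm (g (Sup K) - g (Inf K))) < e"
    and good: "\<And>p. p \<in> D \<Longrightarrow> \<not> P p \<Longrightarrow> - e * (Sup (snd p) - Inf (snd p)) \<le> g (Sup (snd p)) - g (Inf (snd p))"
  shows "g a - g b < e * (1 + (b - a))"
proof -
  define D1 where "D1 = {p\<in>D. P p}"
  define D2 where "D2 = {p\<in>D. \<not> P p}"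
  have "finite D" using D by blast
  have "- norm z \<le> z" for z :: real
    by (metis abs_ge_minus_self minus_le_iff real_norm_def)
  then have "(\<Sum>(x,K)\<in>D1. - norm (g (Sup K) - g (Inf K))) \<le> (\<Sum>(x,K)\<in>D1. g (Sup K) - g (Inf K))"
    by (intro sum_mono) (simp add: case_prod_beta)
  with bad have sum1: "- e < (\<Sum>(x,K)\<in>D1. g (Sup K) - g (Inf K))"
    by (simp add: D1_def sum_negf case_prod_beta)
  have "(\<Sum>p\<in>D2. - e * (Sup (snd p) - Inf (snd p))) \<le> (\<Sum>(x,K)\<in>D2. g (Sup K) - g (Inf K))"
    using good by (intro sum_mono) (auto simp: D2_def case_prod_beta)
  then have lower: "- e * (\<Sum>(x,K)\<in>D2. Sup K - Inf K) \<le> (\<Sum>(x,K)\<in>D2. g (Sup K) - g (Inf K))"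
    by (simp add: sum_distrib_left case_prod_beta)
  have "(\<Sum>(x,K)\<in>D2. Sup K - Inf K) \<le> (\<Sum>(x,K)\<in>D. Sup K - Inf K)"
  proof (rule sum_mono2[OF \<open>finite D\<close>])
    show "0 \<le> (case p of (x, K) \<Rightarrow> Sup K - Inf K)" if "p \<in> D - D2" for p
      using that tagged_division_of_real_elem[OF D, of "fst p" "snd p"] by (auto simp: case_prod_beta)
  qed (auto simp: D2_def)
  also have "(\<Sum>(x,K)\<in>D. Sup K - Inf K) = b - a"
    using additive_tagged_division_1[OF assms(1) D, of id] by simp
  finally have "e * (\<Sum>(x,K)\<in>D2. Sup K - Inf K) \<le> e * (b - a)"
    using \<open>0 \<le> e\<close> by (intro mult_left_mono) auto
  with lower have sum2: "- e * (b - a) \<le> (\<Sum>(x,K)\<in>D2. g (Sup K) - g (Inf K))" by linarith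
  have "D \<inter> {p. P p} = D1" "D - {p. P p} = D2" by (auto simp: D1_def D2_def)
  then have "g b - g a = (\<Sum>(x,K)\<in>D1. g (Sup K) - g (Inf K)) + (\<Sum>(x,K)\<in>D2. g (Sup K) - g (Inf K))"
    using additive_tagged_division_1[OF assms(1) D, of g]
      sum.Int_Diff[OF \<open>finite D\<close>, of "\<lambda>(x,K). g (Sup K) - g (Inf K)" "{p. P p}"]
    by simp
  with sum1 sum2 show ?thesis by (simp add: algebra_simps)
qed

(* Cousin's lemma argument: on a division fine for both gauges, each tag where the derivative
   bound applies contributes at least -eps times the length of its interval, and the tags in the
   negligible remainder contribute at least -eps in total by absolute continuity. *)
lemma abs_continuous_on_mono:
  fixes g :: "real \<Rightarrow> real"
  assumes "a \<le> b" "abs_continuous_on a b g" "N \<in> null_sets lborel"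
    and deriv: "\<And>x. x \<in> {a<..<b} - N \<Longrightarrow> \<exists>d\<ge>0. (g has_real_derivative d) (at x)"
  shows "g a \<le> g b"
proof (rule field_le_epsilon)
  fix e :: real assume "e > 0"
  define N' where "N' = N \<union> {a, b}"
  have "negligible N'"
    using assms(3) by (simp add: N'_def negligible_iff_null_sets null_sets_completionI)
  define \<epsilon> where "\<epsilon> = e / (1 + (b - a))"
  have "\<epsilon> > 0" using \<open>e > 0\<close> assms(1) by (simp add: \<epsilon>_def)
  obtain \<gamma>1 where "gauge \<gamma>1" and \<gamma>1: "\<And>D. D tagged_division_of {a..b} \<Longrightarrow> \<gamma>1 fine D \<Longrightarrow>
      (\<Sum>(x,K)\<in>{p\<in>D. fst p \<in> N'}. norm (g (Sup K) - g (Inf K))) < \<epsilon>"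
    using abs_continuous_on_negligible_tags[OF assms(2) \<open>negligible N'\<close> \<open>\<epsilon> > 0\<close>] by blast
  have "\<exists>d\<ge>0. (g has_real_derivative d) (at x)" if "x \<in> {a<..<b} - N'" for x
    using deriv that by (simp add: N'_def)
  then obtain \<gamma>2 where "gauge \<gamma>2" and \<gamma>2: "\<And>x u v. x \<in> {a<..<b} - N' \<Longrightarrow> u \<le> x \<Longrightarrow> x \<le> v \<Longrightarrow>
      {u..v} \<subseteq> \<gamma>2 x \<Longrightarrow> - \<epsilon> * (v - u) \<le> g v - g u"
    using nonneg_derivative_gauge[OF _ \<open>\<epsilon> > 0\<close>] by blast
  obtain D where D: "D tagged_division_of {a..b}" and "(\<lambda>x. \<gamma>1 x \<inter> \<gamma>2 x) fine D"
    using fine_division_exists_real[OF gauge_Int[OF \<open>gauge \<gamma>1\<close> \<open>gauge \<gamma>2\<close>]] by blast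
  then have "\<gamma>1 fine D" "\<gamma>2 fine D" by (auto simp: fine_Int)
  have "g a - g b < \<epsilon> * (1 + (b - a))"
  proof (rule tagged_division_increment_lower_bound[OF assms(1) D _ \<gamma>1[OF D \<open>\<gamma>1 fine D\<close>]])
    fix p assume "p \<in> D" "fst p \<notin> N'"
    moreover obtain x K where "p = (x, K)" by fastforce
    ultimately obtain u v where K: "K = {u..v}" "a \<le> u" "u \<le> x" "x \<le> v" "v \<le> b"
      using tagged_division_of_real_elem[OF D] by blast
    with \<open>fst p \<notin> N'\<close> \<open>p = (x, K)\<close> have "x \<in> {a<..<b} - N'" by (auto simp: N'_def)
    moreover have "K \<subseteq> \<gamma>2 x" using \<open>\<gamma>2 fine D\<close> \<open>p \<in> D\<close> \<open>p = (x, K)\<close> by (auto simp: fine_def)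
    ultimately show "- \<epsilon> * (Sup (snd p) - Inf (snd p)) \<le> g (Sup (snd p)) - g (Inf (snd p))"
      using \<gamma>2 K \<open>p = (x, K)\<close> by simp
  qed (use \<open>\<epsilon> > 0\<close> in simp)
  also have "\<epsilon> * (1 + (b - a)) = e" using assms(1) by (simp add: \<epsilon>_def)
  finally show "g a \<le> g b + e" by simp
qed

lemma abs_continuous_on_stays_nonpos:
  fixes G :: "real \<Rightarrow> real"
  assumes "abs_continuous_on a b G" "G a \<le> 0" "N \<in> null_sets lborel"
    and deriv: "\<And>x. x \<in> {a<..<b} - N \<Longrightarrow> 0 < G x \<Longrightarrow> \<exists>d\<le>0. (G has_real_derivative d) (at x)"
    and "t \<in> {a..b}"
  shows "G t \<le> 0"
proof -
  define S where "S = {a..t} \<inter> G -` {..0}"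
  have "continuous_on {a..t} G"
    using abs_continuous_on_imp_continuous_on[OF assms(1)] assms(5) by (auto intro: continuous_on_subset)
  then have "closed S" unfolding S_def by (intro continuous_closed_preimage) auto
  moreover have "a \<in> S" using assms(2,5) by (simp add: S_def)
  moreover have "bdd_above S" by (auto simp: S_def bdd_above_def)
  ultimately have "Sup S \<in> S" using closed_contains_Sup by blast
  define s where "s = Sup S"
  have s: "a \<le> s" "s \<le> t" "G s \<le> 0" using \<open>Sup S \<in> S\<close> by (auto simp: s_def S_def)
  have pos: "G x > 0" if "x \<in> {s<..t}" for x
  proof (rule ccontr)
    assume "\<not> G x > 0"
    with that s have "x \<in> S" by (auto simp: S_def)
    then show False using cSup_upper[OF _ \<open>bdd_above S\<close>] that by (force simp: s_def)
  qed
  have "- G s \<le> - G t"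
  proof (rule abs_continuous_on_mono[where g = "\<lambda>x. - G x", OF _ _ assms(3)])
    show "abs_continuous_on s t (\<lambda>x. - G x)"
      using abs_continuous_on_uminus[OF abs_continuous_on_subinterval[OF assms(1)]] s assms(5) by simp
    fix x assume x: "x \<in> {s<..<t} - N"
    with s assms(5) pos obtain d where "d \<le> 0" "(G has_real_derivative d) (at x)"
      using deriv[of x] by force
    then show "\<exists>d\<ge>0. ((\<lambda>x. - G x) has_real_derivative d) (at x)"
      using DERIV_minus by (metis neg_0_le_iff_le)
  qed (use s in simp)
  with s show ?thesis by simp
qed

lemma sym_pos_def_matrix_inv_pos:
  fixes A :: "real^'n^'n"
  assumes "sym_pos_def A" "z \<noteq> 0"
  shows "z \<bullet> (matrix_inv A *v z) > 0"
proof -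
  have pd: "\<And>w. w \<noteq> 0 \<Longrightarrow> w \<bullet> (A *v w) > 0" using assms(1) by (simp add: sym_pos_def_def)
  then have "\<forall>x. A *v x = 0 \<longrightarrow> x = 0" by fastforce
  then obtain B :: "real^'n^'n" where "B ** A = mat 1" using matrix_left_invertible_ker by blast
  then have "A ** B = mat 1 \<and> B ** A = mat 1" using matrix_left_right_inverse by blast
  then have "A ** matrix_inv A = mat 1"
    unfolding matrix_inv_def by (rule someI2[where Q = "\<lambda>A'. A ** A' = mat 1"]) blast
  then have Aw: "A *v (matrix_inv A *v z) = z" by (simp add: matrix_vector_mul_assoc)
  then have "matrix_inv A *v z \<noteq> 0" using assms(2) by auto
  then show ?thesis using pd Aw by (metis inner_commute)
qed

lemma Dq_pos: "sym_pos_def (M q) \<Longrightarrow> nvec fc q \<noteq> 0 \<Longrightarrow> Dq M fc q > 0"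
  unfolding Dq_def by (rule sym_pos_def_matrix_inv_pos)

lemma has_derivative_gradient:
  fixes f :: "real^'n \<Rightarrow> real"
  assumes "(f has_derivative blinfun_apply f') (at q)"
  shows "gradient f q = (\<chi> i. f' (axis i 1))"
    and "(f has_derivative (\<lambda>h. gradient f q \<bullet> h)) (at q)"
proof -
  show grad: "gradient f q = (\<chi> i. f' (axis i 1))"
    unfolding gradient_def using frechet_derivative_at[OF assms] by simp
  have "blinfun_apply f' h = gradient f q \<bullet> h" for h
  proof -
    have "blinfun_apply f' h = blinfun_apply f' (\<Sum>i\<in>UNIV. h $ i *\<^sub>R axis i 1)"
      using basis_expansion[of h] by (simp add: scalar_mult_eq_scaleR)
    also have "\<dots> = (\<Sum>i\<in>UNIV. h $ i * f' (axis i 1))"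
      by (simp add: blinfun.sum_right blinfun.scaleR_right)
    also have "\<dots> = gradient f q \<bullet> h" by (simp add: grad inner_vec_def mult.commute)
    finally show ?thesis .
  qed
  with assms show "(f has_derivative (\<lambda>h. gradient f q \<bullet> h)) (at q)"
    by (metis (no_types, lifting) ext)
qed

lemma has_derivative_vec_lambda:
  fixes f :: "'a::real_normed_vector \<Rightarrow> 'n::finite \<Rightarrow> real"
  assumes "\<And>i. ((\<lambda>x. f x i) has_derivative f' i) (at x)"
  shows "((\<lambda>x. \<chi> i. f x i) has_derivative (\<lambda>h. \<chi> i. f' i h)) (at x)"
proof -
  have vec: "(\<chi> i. c i) = (\<Sum>i\<in>UNIV. c i *\<^sub>R axis i (1::real))" for c :: "'n \<Rightarrow> real"
    using basis_expansion[of "\<chi> i. c i"] by (simp add: scalar_mult_eq_scaleR)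
  show ?thesis
    unfolding vec by (intro has_derivative_sum has_derivative_scaleR_left assms)
qed

lemma C2_fun_nvec_derivative:
  fixes fc :: "real^'n \<Rightarrow> real"
  assumes "C2_fun fc"
  obtains Dn \<beta> where "\<And>q. (nvec fc has_derivative Dn q) (at q)"
    "\<And>q h. norm (Dn q h) \<le> \<beta> q * norm h" "\<And>q. 0 \<le> \<beta> q" "continuous_on UNIV \<beta>"
proof -
  obtain f' :: "real^'n \<Rightarrow> ((real^'n) \<Rightarrow>\<^sub>L real)" and f'' where
    f': "\<And>q. (fc has_derivative blinfun_apply (f' q)) (at q)" and
    f'': "\<And>q. (f' has_derivative blinfun_apply (f'' q)) (at q)" and "continuous_on UNIV f''"
    using assms unfolding C2_fun_def C1_fun_def by blast
  have "nvec fc = (\<lambda>q. \<chi> i. f' q (axis i 1))"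
    using has_derivative_gradient(1)[OF f'] by (simp add: nvec_def fun_eq_iff)
  moreover have "((\<lambda>q. \<chi> i. f' q (axis i 1)) has_derivative (\<lambda>h. \<chi> i. f'' q h (axis i 1))) (at q)" for q
    by (intro has_derivative_vec_lambda blinfun.FDERIV[OF f'' has_derivative_const, simplified])
  moreover have "norm (\<chi> i. f'' q h (axis i 1)) \<le> (real CARD('n) * norm (f'' q)) * norm h" for q h
  proof -
    have "norm (\<chi> i. f'' q h (axis i 1)) \<le> (\<Sum>i\<in>UNIV. \<bar>f'' q h (axis i 1)\<bar>)"
      using norm_le_l1_cart[of "\<chi> i. f'' q h (axis i 1)"] by simp
    also have "\<dots> \<le> (\<Sum>i\<in>(UNIV::'n set). norm (f'' q) * norm h)"
    proof (rule sum_mono)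
      fix i :: 'n
      have "\<bar>f'' q h (axis i 1)\<bar> \<le> norm (f'' q h) * norm (axis i (1::real))"
        using norm_blinfun[of "f'' q h" "axis i 1"] by simp
      also have "\<dots> \<le> norm (f'' q) * norm h" by (simp add: norm_blinfun)
      finally show "\<bar>f'' q h (axis i 1)\<bar> \<le> norm (f'' q) * norm h" .
    qed
    finally show ?thesis by simp
  qed
  moreover have "continuous_on UNIV (\<lambda>q. real CARD('n) * norm (f'' q))"
    by (intro continuous_intros) fact
  ultimately show ?thesis by (intro that) auto
qed

lemma C2_fun_has_derivative_nvec:
  "C2_fun fc \<Longrightarrow> (fc has_derivative (\<lambda>h. nvec fc q \<bullet> h)) (at q)"
  unfolding C2_fun_def C1_fun_def nvec_def using has_derivative_gradient(2) by blast

lemma phi_eq: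
  assumes "\<And>q. (nvec fc has_derivative Dn q) (at q)"
  shows "phi fv fc q v w = nvec fc q \<bullet> fv q v w + Dn q v \<bullet> v"
proof -
  have "frechet_derivative (\<lambda>p. nvec fc p \<bullet> v) (at q) = (\<lambda>h. Dn q h \<bullet> v)"
    using frechet_derivative_at[OF has_derivative_inner_left[OF assms]] by simp
  then show ?thesis by (simp add: phi_def)
qed

lemma continuous_on_nvec: "C2_fun fc \<Longrightarrow> continuous_on UNIV (nvec fc)"
  by (elim C2_fun_nvec_derivative)
    (metis continuous_at_imp_continuous_on has_derivative_continuous)

lemma has_derivative_c1:
  assumes "C2_fun fc"
  shows "(c1 fc has_derivative (\<lambda>H. nvec fc (fst Y) \<bullet> fst H)) (at Y)"
  unfolding c1_def[abs_def]
  by (rule has_derivative_compose[OF has_derivative_fst[OF has_derivative_ident]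
        C2_fun_has_derivative_nvec[OF assms]])

lemma has_derivative_c2:
  assumes "\<And>q. (nvec fc has_derivative Dn q) (at q)"
  shows "(c2 fc has_derivative
           (\<lambda>H. nvec fc (fst Y) \<bullet> fst (snd H) + Dn (fst Y) (fst H) \<bullet> fst (snd Y))) (at Y)"
proof -
  have "((\<lambda>Y. nvec fc (fst Y)) has_derivative (\<lambda>H. Dn (fst Y) (fst H))) (at Y)"
    by (rule has_derivative_compose[OF has_derivative_fst[OF has_derivative_ident] assms])
  moreover have "((\<lambda>Y. fst (snd Y)) has_derivative (\<lambda>H. fst (snd H))) (at Y)"
    for Y :: "(real^'n) \<times> (real^'n) \<times> real"
    by (intro has_derivative_fst has_derivative_snd has_derivative_ident)
  ultimately show ?thesis
    unfolding c2_def[abs_def] by (rule has_derivative_inner)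
qed

lemma abs_continuous_on_c1:
  fixes y :: "real \<Rightarrow> (real^'n) \<times> (real^'n) \<times> real"
  assumes "C2_fun fc" "abs_continuous_on a b y"
  shows "abs_continuous_on a b (\<lambda>t. c1 fc (y t))"
proof (rule abs_continuous_on_compose_derivative_bound[OF assms(2) has_derivative_c1[OF assms(1)]])
  show "norm (nvec fc (fst Y) \<bullet> fst H) \<le> norm (nvec fc (fst Y)) * norm H"
    for Y H :: "(real^'n) \<times> (real^'n) \<times> real"
  proof -
    have "norm (fst H) \<le> norm H" by (metis norm_fst_le prod.collapse)
    then show ?thesis
      using Cauchy_Schwarz_ineq2[of "nvec fc (fst Y)" "fst H"] by (simp add: mult_left_mono order_trans)
  qed
  show "continuous_on UNIV (\<lambda>Y :: (real^'n) \<times> (real^'n) \<times> real. norm (nvec fc (fst Y)))"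
    by (intro continuous_intros continuous_on_compose2[OF continuous_on_nvec[OF assms(1)]]) auto
qed

lemma abs_continuous_on_c2:
  fixes y :: "real \<Rightarrow> (real^'n) \<times> (real^'n) \<times> real"
  assumes "C2_fun fc" "abs_continuous_on a b y"
  shows "abs_continuous_on a b (\<lambda>t. c2 fc (y t))"
proof -
  obtain Dn \<beta> where Dn: "\<And>q. (nvec fc has_derivative Dn q) (at q)"
    and \<beta>: "\<And>q h. norm (Dn q h) \<le> \<beta> q * norm h" "\<And>q. 0 \<le> \<beta> q" "continuous_on UNIV \<beta>"
    using C2_fun_nvec_derivative[OF assms(1)] by blast
  show ?thesis
  proof (rule abs_continuous_on_compose_derivative_bound[OF assms(2) has_derivative_c2[OF Dn]])
    fix Y H :: "(real^'n) \<times> (real^'n) \<times> real"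
    have H: "norm (fst H) \<le> norm H" "norm (fst (snd H)) \<le> norm H"
      by (metis norm_fst_le prod.collapse) (metis norm_fst_le norm_snd_le prod.collapse order_trans)
    have "norm (nvec fc (fst Y) \<bullet> fst (snd H) + Dn (fst Y) (fst H) \<bullet> fst (snd Y))
        \<le> norm (nvec fc (fst Y)) * norm (fst (snd H)) + norm (Dn (fst Y) (fst H)) * norm (fst (snd Y))"
      by (rule order_trans[OF norm_triangle_ineq add_mono]) (simp_all add: Cauchy_Schwarz_ineq2)
    also have "\<dots> \<le> norm (nvec fc (fst Y)) * norm H + (\<beta> (fst Y) * norm H) * norm (fst (snd Y))"
      using H \<beta>(1)[of "fst Y" "fst H"] \<beta>(2)[of "fst Y"]
      by (intro add_mono mult_left_mono mult_right_mono) (auto intro: order_trans mult_left_mono)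
    also have "\<dots> = (norm (nvec fc (fst Y)) + \<beta> (fst Y) * norm (fst (snd Y))) * norm H"
      by (simp add: algebra_simps)
    finally show "norm (nvec fc (fst Y) \<bullet> fst (snd H) + Dn (fst Y) (fst H) \<bullet> fst (snd Y))
        \<le> (norm (nvec fc (fst Y)) + \<beta> (fst Y) * norm (fst (snd Y))) * norm H" .
  next
    show "continuous_on UNIV (\<lambda>Y :: (real^'n) \<times> (real^'n) \<times> real.
        norm (nvec fc (fst Y)) + \<beta> (fst Y) * norm (fst (snd Y)))"
      by (intro continuous_intros continuous_on_compose2[OF continuous_on_nvec[OF assms(1)]]
          continuous_on_compose2[OF \<beta>(3)]) auto
  qed
qed

lemma has_real_derivative_compose_vector:
  fixes G :: "'a::real_normed_vector \<Rightarrow> real"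
  assumes "(y has_vector_derivative d) (at \<tau>)" "(G has_derivative G') (at (y \<tau>))"
  shows "((\<lambda>t. G (y t)) has_real_derivative G' d) (at \<tau>)"
proof -
  have "((\<lambda>t. G (y t)) has_derivative (\<lambda>x. G' (x *\<^sub>R d))) (at \<tau>)"
    using has_derivative_compose[OF assms(1)[unfolded has_vector_derivative_def] assms(2)] .
  moreover have "(\<lambda>x. G' (x *\<^sub>R d)) = (*) (G' d)"
    using linear_cmul[OF has_derivative_linear[OF assms(2)]] by (auto simp: mult.commute)
  ultimately show ?thesis by (simp add: has_field_derivative_def)
qed

definition TF_field :: "(real^'n \<Rightarrow> real^'n \<Rightarrow> real^'m \<Rightarrow> real^'n) \<Rightarrow> (real^'n \<Rightarrow> real^'n^'n)
    \<Rightarrow> (real^'n \<Rightarrow> real) \<Rightarrow> real \<Rightarrow> (real^'n) \<times> (real^'n) \<times> real \<Rightarrow> real^'m \<Rightarrow> real \<times> real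
    \<Rightarrow> (real^'n) \<times> (real^'n) \<times> real" where
  "TF_field fv M fc an Y w \<theta> = fst \<theta> *\<^sub>R f1 fv Y w + snd \<theta> *\<^sub>R f2 M fc an Y"

lemma TF_field_components:
  "fst (TF_field fv M fc an Y w \<theta>) = fst \<theta> *\<^sub>R fst (snd Y)"
  "fst (snd (TF_field fv M fc an Y w \<theta>)) = fst \<theta> *\<^sub>R fv (fst Y) (fst (snd Y)) w
     + (snd \<theta> * an) *\<^sub>R (matrix_inv (M (fst Y)) *v nvec fc (fst Y))"
  "snd (snd (TF_field fv M fc an Y w \<theta>)) = fst \<theta>"
  by (simp_all add: TF_field_def f1_def f2_def)

lemma c1_has_real_derivative_TF_field:
  assumes "C2_fun fc" "(y has_vector_derivative TF_field fv M fc an (y \<tau>) w \<theta>) (at \<tau>)"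
  shows "((\<lambda>t. c1 fc (y t)) has_real_derivative fst \<theta> * c2 fc (y \<tau>)) (at \<tau>)"
  using has_real_derivative_compose_vector[OF assms(2) has_derivative_c1[OF assms(1)]]
  by (simp only: TF_field_components inner_scaleR_right c2_def)

lemma c2_has_real_derivative_TF_field:
  assumes "C2_fun fc" "(y has_vector_derivative TF_field fv M fc an (y \<tau>) w \<theta>) (at \<tau>)"
  shows "((\<lambda>t. c2 fc (y t)) has_real_derivative
           fst \<theta> * phi fv fc (fst (y \<tau>)) (fst (snd (y \<tau>))) w + snd \<theta> * an * Dq M fc (fst (y \<tau>))) (at \<tau>)"
proof -
  obtain Dn where Dn: "\<And>q. (nvec fc has_derivative Dn q) (at q)"
    by (rule C2_fun_nvec_derivative[OF assms(1)]) blast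
  define q where "q = fst (y \<tau>)"
  define v where "v = fst (snd (y \<tau>))"
  have "Dn q (fst \<theta> *\<^sub>R v) = fst \<theta> *\<^sub>R Dn q v"
    using linear_cmul[OF has_derivative_linear[OF Dn]] .
  then have "nvec fc q \<bullet> fst (snd (TF_field fv M fc an (y \<tau>) w \<theta>)) + Dn q (fst (TF_field fv M fc an (y \<tau>) w \<theta>)) \<bullet> v
      = fst \<theta> * (nvec fc q \<bullet> fv q v w + Dn q v \<bullet> v) + snd \<theta> * an * Dq M fc q"
    by (simp add: TF_field_components q_def v_def Dq_def inner_add_right distrib_left)
  then show ?thesis
    using has_real_derivative_compose_vector[OF assms(2) has_derivative_c2[OF Dn]]
    by (simp add: phi_eq[OF Dn] q_def v_def)
qed

lemma TF_mult_signs: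
  assumes "C2_fun fc" "TF_mult fc Y \<theta>"
  shows "0 < fst \<theta> \<Longrightarrow> 0 \<le> c1 fc Y \<or> 0 \<le> c2 fc Y"
    and "0 < snd \<theta> \<Longrightarrow> c1 fc Y \<le> 0 \<and> c2 fc Y \<le> 0"
proof -
  obtain Dn where Dn: "\<And>q. (nvec fc has_derivative Dn q) (at q)"
    by (rule C2_fun_nvec_derivative[OF assms(1)]) blast
  have cont: "continuous_on UNIV (c1 fc)" "continuous_on UNIV (c2 fc)"
    by (rule has_derivative_continuous_on[OF has_derivative_at_withinI[OF has_derivative_c1[OF assms(1)]]],
        rule has_derivative_continuous_on[OF has_derivative_at_withinI[OF has_derivative_c2[OF Dn]]])
  have "closure (R1 fc) \<subseteq> {Y. 0 \<le> c1 fc Y} \<union> {Y. 0 \<le> c2 fc Y}"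
    by (rule closure_minimal) (auto simp: R1_def intro!: closed_Un closed_Collect_le cont)
  moreover have "closure (R2 fc) \<subseteq> {Y. c1 fc Y \<le> 0} \<inter> {Y. c2 fc Y \<le> 0}"
    by (rule closure_minimal) (auto simp: R2_def intro!: closed_Int closed_Collect_le cont)
  ultimately show "0 < fst \<theta> \<Longrightarrow> 0 \<le> c1 fc Y \<or> 0 \<le> c2 fc Y"
    and "0 < snd \<theta> \<Longrightarrow> c1 fc Y \<le> 0 \<and> c2 fc Y \<le> 0"
    using assms(2) by (auto simp: TF_mult_def)
qed

lemma TF_mult_unique:
  assumes "TF_mult fc Y \<theta>"
  shows "\<exists>!\<theta>'. TF_mult fc Y \<theta>' \<and> TF_field fv M fc an Y w \<theta> = TF_field fv M fc an Y w \<theta>'"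
proof (rule ex1I[of _ \<theta>])
  fix \<theta>' assume \<theta>': "TF_mult fc Y \<theta>' \<and> TF_field fv M fc an Y w \<theta> = TF_field fv M fc an Y w \<theta>'"
  have "fst \<theta> = snd (snd (TF_field fv M fc an Y w \<theta>))" by (simp add: TF_field_components)
  also have "\<dots> = fst \<theta>'" using \<theta>' by (simp add: TF_field_components)
  finally show "\<theta>' = \<theta>" using assms \<theta>' by (simp add: TF_mult_def prod_eq_iff)
qed (use assms in simp)

lemma TF_solution_has_derivative_ae:
  assumes "TF_solution fv M fc an u tf y"
  shows "AE \<tau> in lborel. \<tau> \<in> {0<..<tf} \<longrightarrow>
    (\<exists>\<theta>. TF_mult fc (y \<tau>) \<theta> \<and> (y has_vector_derivative TF_field fv M fc an (y \<tau>) (u \<tau>) \<theta>) (at \<tau>))"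
proof -
  have "AE \<tau> in lborel. \<tau> \<in> {0..tf} \<longrightarrow>
      (\<exists>d. (y has_vector_derivative d) (at \<tau> within {0..tf}) \<and> d \<in> F_TF fv M fc an (y \<tau>) (u \<tau>))"
    using assms by (simp add: TF_solution_def)
  then show ?thesis
  proof eventually_elim
    case (elim \<tau>)
    show ?case
    proof
      assume \<tau>: "\<tau> \<in> {0<..<tf}"
      then have "at \<tau> within {0..tf} = at \<tau>" by (simp add: at_within_Icc_at)
      with elim \<tau> show "\<exists>\<theta>. TF_mult fc (y \<tau>) \<theta> \<and> (y has_vector_derivative TF_field fv M fc an (y \<tau>) (u \<tau>) \<theta>) (at \<tau>)"
        by (fastforce simp: F_TF_def TF_field_def)
    qed
  qed
qed

(* The dynamics of the switching functions (g1, g2) = (c1, c2) along a time-freezing solution,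
   with p = phi and d = an * Dq. *)
definition switching_inclusion :: "(real \<Rightarrow> real) \<Rightarrow> (real \<Rightarrow> real) \<Rightarrow> (real \<Rightarrow> real) \<Rightarrow> (real \<Rightarrow> real) \<Rightarrow> real \<Rightarrow> bool" where
  "switching_inclusion g1 g2 p d t \<longleftrightarrow> (\<exists>\<theta>1 \<theta>2. 0 \<le> \<theta>1 \<and> 0 \<le> \<theta>2 \<and> \<theta>1 + \<theta>2 = 1
     \<and> (0 < \<theta>1 \<longrightarrow> 0 \<le> g1 t \<or> 0 \<le> g2 t) \<and> (0 < \<theta>2 \<longrightarrow> g1 t \<le> 0 \<and> g2 t \<le> 0)
     \<and> (g1 has_real_derivative \<theta>1 * g2 t) (at t) \<and> (g2 has_real_derivative \<theta>1 * p t + \<theta>2 * d t) (at t))"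

lemma has_real_derivative_zero_if_vanishing:
  assumes "(g has_real_derivative l) (at x)" "x \<in> {a<..<b}" "\<And>s. s \<in> {a..b} \<Longrightarrow> g s = 0"
  shows "l = 0"
proof (rule DERIV_local_const[OF assms(1)])
  show "0 < min (x - a) (b - x)" using assms(2) by simp
  show "\<forall>s. \<bar>x - s\<bar> < min (x - a) (b - x) \<longrightarrow> g x = g s"
  proof (intro allI impI)
    fix s assume "\<bar>x - s\<bar> < min (x - a) (b - x)"
    then have "s \<in> {a..b}" by auto
    then show "g x = g s" using assms(2,3) by auto
  qed
qed

lemma switching_inclusion_c2_nonpos:
  fixes g1 g2 p d :: "real \<Rightarrow> real"
  assumes "abs_continuous_on 0 T g2" "g2 0 = 0" and p_nonpos: "\<And>t. t \<in> {0..T} \<Longrightarrow> p t \<le> 0"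
    and "N \<in> null_sets lborel" and sw: "\<And>t. t \<in> {0<..<T} - N \<Longrightarrow> switching_inclusion g1 g2 p d t"
    and "t \<in> {0..T}"
  shows "g2 t \<le> 0"
proof (rule abs_continuous_on_stays_nonpos[OF assms(1) _ assms(4) _ assms(6)])
  fix x assume x: "x \<in> {0<..<T} - N" "0 < g2 x"
  obtain \<theta>1 \<theta>2 where "0 \<le> \<theta>2" "\<theta>1 + \<theta>2 = 1" "0 < \<theta>2 \<longrightarrow> g1 x \<le> 0 \<and> g2 x \<le> 0"
    and g2': "(g2 has_real_derivative \<theta>1 * p x + \<theta>2 * d x) (at x)"
    using sw[OF x(1)] unfolding switching_inclusion_def by blast
  with x(2) have "\<theta>2 = 0" "\<theta>1 = 1" by auto
  with g2' have "(g2 has_real_derivative p x) (at x)" by simp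
  moreover have "p x \<le> 0" using p_nonpos x(1) by auto
  ultimately show "\<exists>r\<le>0. (g2 has_real_derivative r) (at x)" by blast
qed (simp add: assms(2))

lemma switching_inclusion_c1_vanishes:
  fixes g1 g2 p d :: "real \<Rightarrow> real"
  assumes ac1: "abs_continuous_on 0 T g1" and "g1 0 = 0" and g2_nonpos: "\<And>t. t \<in> {0..T} \<Longrightarrow> g2 t \<le> 0"
    and N: "N \<in> null_sets lborel" and sw: "\<And>t. t \<in> {0<..<T} - N \<Longrightarrow> switching_inclusion g1 g2 p d t"
    and t: "t \<in> {0..T}"
  shows "g1 t = 0"
proof -
  have "- g1 t \<le> 0"
  proof (rule abs_continuous_on_stays_nonpos[OF abs_continuous_on_uminus[OF ac1] _ N _ t])
    fix x assume x: "x \<in> {0<..<T} - N" "0 < - g1 x"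
    obtain \<theta>1 where "0 \<le> \<theta>1" "0 < \<theta>1 \<longrightarrow> 0 \<le> g1 x \<or> 0 \<le> g2 x"
      and g1': "(g1 has_real_derivative \<theta>1 * g2 x) (at x)"
      using sw[OF x(1)] unfolding switching_inclusion_def by blast
    with x(2) have "0 \<le> \<theta>1 * g2 x" by (cases "\<theta>1 = 0") auto
    then show "\<exists>r\<le>0. ((\<lambda>x. - g1 x) has_real_derivative r) (at x)"
      using DERIV_minus[OF g1'] by (intro exI[of _ "- (\<theta>1 * g2 x)"]) simp
  qed (simp add: \<open>g1 0 = 0\<close>)
  moreover have "g1 t \<le> 0"
  proof (rule abs_continuous_on_stays_nonpos[OF ac1 _ N _ t])
    fix x assume x: "x \<in> {0<..<T} - N" "0 < g1 x"
    obtain \<theta>1 where "0 \<le> \<theta>1" and g1': "(g1 has_real_derivative \<theta>1 * g2 x) (at x)"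
      using sw[OF x(1)] unfolding switching_inclusion_def by blast
    moreover have "g2 x \<le> 0" using g2_nonpos x(1) by simp
    ultimately show "\<exists>r\<le>0. (g1 has_real_derivative r) (at x)"
      by (intro exI[of _ "\<theta>1 * g2 x"]) (simp add: mult_nonneg_nonpos)
  qed (simp add: \<open>g1 0 = 0\<close>)
  ultimately show ?thesis by simp
qed

lemma switching_inclusion_c2_nonneg:
  fixes g1 g2 p d :: "real \<Rightarrow> real"
  assumes ac2: "abs_continuous_on 0 T g2" and "g2 0 = 0" and g1_zero: "\<And>t. t \<in> {0..T} \<Longrightarrow> g1 t = 0"
    and d_pos: "\<And>t. g1 t = 0 \<Longrightarrow> 0 < d t"
    and N: "N \<in> null_sets lborel" and sw: "\<And>t. t \<in> {0<..<T} - N \<Longrightarrow> switching_inclusion g1 g2 p d t"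
    and t: "t \<in> {0..T}"
  shows "0 \<le> g2 t"
proof -
  have "- g2 t \<le> 0"
  proof (rule abs_continuous_on_stays_nonpos[OF abs_continuous_on_uminus[OF ac2] _ N _ t])
    fix x assume x: "x \<in> {0<..<T} - N" "0 < - g2 x"
    obtain \<theta>1 \<theta>2 where "\<theta>1 + \<theta>2 = 1"
      and g1': "(g1 has_real_derivative \<theta>1 * g2 x) (at x)"
      and g2': "(g2 has_real_derivative \<theta>1 * p x + \<theta>2 * d x) (at x)"
      using sw[OF x(1)] unfolding switching_inclusion_def by blast
    have "\<theta>1 * g2 x = 0"
      using has_real_derivative_zero_if_vanishing[OF g1'] g1_zero x(1) by blast
    with x(2) \<open>\<theta>1 + \<theta>2 = 1\<close> have "\<theta>1 = 0" "\<theta>2 = 1" by auto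
    moreover have "0 < d x" using d_pos g1_zero x(1) by simp
    ultimately show "\<exists>r\<le>0. ((\<lambda>x. - g2 x) has_real_derivative r) (at x)"
      using DERIV_minus[OF g2'] by (intro exI[of _ "- d x"]) simp
  qed (simp add: \<open>g2 0 = 0\<close>)
  then show ?thesis by simp
qed

lemma switching_inclusion_vanishes:
  fixes g1 g2 p d :: "real \<Rightarrow> real"
  assumes ac: "abs_continuous_on 0 T g1" "abs_continuous_on 0 T g2"
    and init: "g1 0 = 0" "g2 0 = 0" and p_nonpos: "\<And>t. t \<in> {0..T} \<Longrightarrow> p t \<le> 0"
    and d_pos: "\<And>t. g1 t = 0 \<Longrightarrow> 0 < d t"
    and dyn: "AE t in lborel. t \<in> {0<..<T} \<longrightarrow> switching_inclusion g1 g2 p d t"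
    and t: "t \<in> {0..T}"
  shows "g1 t = 0 \<and> g2 t = 0"
proof -
  obtain N where sw: "\<And>x. x \<in> space lborel - N \<Longrightarrow> x \<in> {0<..<T} \<longrightarrow> switching_inclusion g1 g2 p d x"
    and N: "N \<in> null_sets lborel"
    using dyn by (rule AE_E3) blast
  then have sw: "\<And>x. x \<in> {0<..<T} - N \<Longrightarrow> switching_inclusion g1 g2 p d x" by simp
  have c2_nonpos: "g2 s \<le> 0" if "s \<in> {0..T}" for s
    by (rule switching_inclusion_c2_nonpos[OF ac(2) init(2) p_nonpos N sw that])
  have c1_vanishes: "g1 s = 0" if "s \<in> {0..T}" for s
    by (rule switching_inclusion_c1_vanishes[OF ac(1) init(1) c2_nonpos N sw that])
  show ?thesis
    using c1_vanishes[OF t] c2_nonpos[OF t] switching_inclusion_c2_nonneg[OF ac(2) init(2) c1_vanishes d_pos N sw t]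
    by simp
qed

lemma TF_solution_in_Sigma:
  assumes fc_C2: "C2_fun fc" and M_spd: "\<forall>q. sym_pos_def (M q)"
    and regular: "\<forall>q. fc q = 0 \<longrightarrow> nvec fc q \<noteq> 0" and "an > 0"
    and sol: "TF_solution fv M fc an u tf y" and init: "y 0 \<in> Sigma_set fc"
    and persistent: "\<forall>\<tau>\<in>{0..tf}. phi fv fc (fst (y \<tau>)) (fst (snd (y \<tau>))) (u \<tau>) \<le> 0"
    and "\<tau> \<in> {0..tf}"
  shows "y \<tau> \<in> Sigma_set fc"
proof -
  define p where "p t = phi fv fc (fst (y t)) (fst (snd (y t))) (u t)" for t
  define d where "d t = an * Dq M fc (fst (y t))" for t
  have ac: "abs_continuous_on 0 tf y" using sol by (simp add: TF_solution_def)
  have dyn: "AE t in lborel. t \<in> {0<..<tf} \<longrightarrow>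
      switching_inclusion (\<lambda>t. c1 fc (y t)) (\<lambda>t. c2 fc (y t)) p d t"
    using TF_solution_has_derivative_ae[OF sol]
  proof eventually_elim
    case (elim t)
    show ?case
    proof
      assume "t \<in> {0<..<tf}"
      with elim obtain \<theta> where \<theta>: "TF_mult fc (y t) \<theta>"
        and y': "(y has_vector_derivative TF_field fv M fc an (y t) (u t) \<theta>) (at t)" by blast
      show "switching_inclusion (\<lambda>t. c1 fc (y t)) (\<lambda>t. c2 fc (y t)) p d t"
        unfolding switching_inclusion_def
        using \<theta> TF_mult_signs[OF fc_C2 \<theta>] c1_has_real_derivative_TF_field[OF fc_C2 y']
          c2_has_real_derivative_TF_field[OF fc_C2 y']
        by (intro exI[of _ "fst \<theta>"] exI[of _ "snd \<theta>"]) (auto simp: TF_mult_def p_def d_def mult.assoc)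
    qed
  qed
  have "c1 fc (y \<tau>) = 0 \<and> c2 fc (y \<tau>) = 0"
  proof (rule switching_inclusion_vanishes[OF abs_continuous_on_c1[OF fc_C2 ac]
        abs_continuous_on_c2[OF fc_C2 ac] _ _ _ _ dyn \<open>\<tau> \<in> {0..tf}\<close>])
    show "c1 fc (y 0) = 0" "c2 fc (y 0) = 0" using init by (simp_all add: Sigma_set_def c1_def c2_def)
    show "p t \<le> 0" if "t \<in> {0..tf}" for t using persistent that by (simp add: p_def)
    show "0 < d t" if "c1 fc (y t) = 0" for t
      using that regular M_spd \<open>an > 0\<close> by (simp add: d_def c1_def Dq_pos)
  qed
  then show ?thesis by (simp add: Sigma_set_def c1_def c2_def)
qed

lemma gamma_pos_le_1:
  assumes "0 < Dq M fc q" "0 < an" "phi fv fc q v w \<le> 0"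
  shows "0 < gamma fv M fc an q v w" "gamma fv M fc an q v w \<le> 1"
proof -
  have "0 < Dq M fc q * an" using assms(1,2) by simp
  then show "0 < gamma fv M fc an q v w" "gamma fv M fc an q v w \<le> 1"
    using assms(3) by (simp_all add: gamma_def divide_le_eq_1)
qed

lemma TF_field_sliding:
  assumes "fst \<theta> + snd \<theta> = 1"
    and balance: "fst \<theta> * phi fv fc (fst Y) (fst (snd Y)) w + snd \<theta> * an * Dq M fc (fst Y) = 0"
    and "0 < Dq M fc (fst Y)" "0 < an" "phi fv fc (fst Y) (fst (snd Y)) w \<le> 0"
  shows "TF_field fv M fc an Y w \<theta> = gamma fv M fc an (fst Y) (fst (snd Y)) w *\<^sub>R
      (fst (fDAE fv M fc (fst Y) (fst (snd Y)) w), snd (fDAE fv M fc (fst Y) (fst (snd Y)) w), 1)"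
proof -
  define P where "P = phi fv fc (fst Y) (fst (snd Y)) w"
  define D where "D = Dq M fc (fst Y)"
  have "0 < D" "0 < D * an" using assms(3,4) by (simp_all add: D_def)
  then have "0 < D * an - P" using assms(5) by (simp add: P_def)
  have bal: "fst \<theta> * P + snd \<theta> * an * D = 0" using balance by (simp add: P_def D_def)
  have "snd \<theta> = 1 - fst \<theta>" using assms(1) by simp
  with bal have "fst \<theta> * (D * an - P) = D * an" by algebra
  then have \<theta>1: "fst \<theta> = gamma fv M fc an (fst Y) (fst (snd Y)) w"
    using \<open>0 < D * an - P\<close> by (simp add: gamma_def P_def D_def field_simps)
  from bal have "snd \<theta> * an * D = - (fst \<theta> * P)" by algebra
  then have \<theta>2: "snd \<theta> * an = - (fst \<theta> * (P / D))"
    using \<open>0 < D\<close> by (simp add: field_simps)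
  show ?thesis
    by (simp add: prod_eq_iff TF_field_components fDAE_def fDAE_v_def \<theta>1[symmetric] \<theta>2
        P_def[symmetric] D_def[symmetric] scaleR_diff_right)
qed

lemma TF_solution_sliding_ae:
  assumes fc_C2: "C2_fun fc" and M_spd: "\<forall>q. sym_pos_def (M q)"
    and regular: "\<forall>q. fc q = 0 \<longrightarrow> nvec fc q \<noteq> 0" and an_pos: "an > 0"
    and sol: "TF_solution fv M fc an u tf y" and init: "y 0 \<in> Sigma_set fc"
    and persistent: "\<forall>\<tau>\<in>{0..tf}. phi fv fc (fst (y \<tau>)) (fst (snd (y \<tau>))) (u \<tau>) \<le> 0"
  shows "AE \<tau> in lborel. \<tau> \<in> {0<..<tf} \<longrightarrow> (\<exists>\<theta>. TF_mult fc (y \<tau>) \<theta>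
    \<and> (y has_vector_derivative TF_field fv M fc an (y \<tau>) (u \<tau>) \<theta>) (at \<tau>)
    \<and> fst \<theta> * phi fv fc (fst (y \<tau>)) (fst (snd (y \<tau>))) (u \<tau>) + snd \<theta> * an * Dq M fc (fst (y \<tau>)) = 0)"
  using TF_solution_has_derivative_ae[OF sol]
proof eventually_elim
  case (elim \<tau>)
  show ?case
  proof
    assume \<tau>: "\<tau> \<in> {0<..<tf}"
    with elim obtain \<theta> where "TF_mult fc (y \<tau>) \<theta>"
      and y': "(y has_vector_derivative TF_field fv M fc an (y \<tau>) (u \<tau>) \<theta>) (at \<tau>)" by blast
    moreover have "c2 fc (y s) = 0" if "s \<in> {0..tf}" for s
      using TF_solution_in_Sigma[OF fc_C2 M_spd regular an_pos sol init persistent that]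
      by (simp add: Sigma_set_def c2_def)
    ultimately show "\<exists>\<theta>. TF_mult fc (y \<tau>) \<theta>
      \<and> (y has_vector_derivative TF_field fv M fc an (y \<tau>) (u \<tau>) \<theta>) (at \<tau>)
      \<and> fst \<theta> * phi fv fc (fst (y \<tau>)) (fst (snd (y \<tau>))) (u \<tau>) + snd \<theta> * an * Dq M fc (fst (y \<tau>)) = 0"
      using has_real_derivative_zero_if_vanishing[OF c2_has_real_derivative_TF_field[OF fc_C2 y'] \<tau>]
      by blast
  qed
qed

lemma TF_solution_sliding_mode_ae:
  assumes fc_C2: "C2_fun fc" and M_spd: "\<forall>q. sym_pos_def (M q)"
    and regular: "\<forall>q. fc q = 0 \<longrightarrow> nvec fc q \<noteq> 0" and an_pos: "an > 0"
    and sol: "TF_solution fv M fc an u tf y" and init: "y 0 \<in> Sigma_set fc"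
    and persistent: "\<forall>\<tau>\<in>{0..tf}. phi fv fc (fst (y \<tau>)) (fst (snd (y \<tau>))) (u \<tau>) \<le> 0"
  shows "AE \<tau> in lborel. \<tau> \<in> {0..tf} \<longrightarrow>
            (\<exists>!\<theta>. TF_mult fc (y \<tau>) \<theta> \<and>
                 vector_derivative y (at \<tau> within {0..tf})
                   = fst \<theta> *\<^sub>R f1 fv (y \<tau>) (u \<tau>) + snd \<theta> *\<^sub>R f2 M fc an (y \<tau>))
          \<and> (y has_vector_derivative
                gamma fv M fc an (fst (y \<tau>)) (fst (snd (y \<tau>))) (u \<tau>) *\<^sub>R
                  (fst (fDAE fv M fc (fst (y \<tau>)) (fst (snd (y \<tau>))) (u \<tau>)),
                   snd (fDAE fv M fc (fst (y \<tau>)) (fst (snd (y \<tau>))) (u \<tau>)), 1))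
              (at \<tau> within {0..tf})" (is "AE \<tau> in lborel. _ \<longrightarrow> ?sliding \<tau>")
  using TF_solution_sliding_ae[OF assms] AE_lborel_singleton[of 0] AE_lborel_singleton[of tf]
proof eventually_elim
  case (elim \<tau>)
  show ?case
  proof
    assume "\<tau> \<in> {0..tf}"
    with elim obtain \<theta> where \<theta>: "TF_mult fc (y \<tau>) \<theta>" "\<tau> \<in> {0<..<tf}"
      and y': "(y has_vector_derivative TF_field fv M fc an (y \<tau>) (u \<tau>) \<theta>) (at \<tau>)"
      and balance: "fst \<theta> * phi fv fc (fst (y \<tau>)) (fst (snd (y \<tau>))) (u \<tau>)
        + snd \<theta> * an * Dq M fc (fst (y \<tau>)) = 0"
      by auto
    have at_within: "at \<tau> within {0..tf} = at \<tau>" using \<theta>(2) by (simp add: at_within_Icc_at)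
    have vd: "vector_derivative y (at \<tau> within {0..tf}) = TF_field fv M fc an (y \<tau>) (u \<tau>) \<theta>"
      using y' by (simp add: at_within vector_derivative_at)
    have "\<exists>!\<theta>'. TF_mult fc (y \<tau>) \<theta>' \<and>
        vector_derivative y (at \<tau> within {0..tf}) = TF_field fv M fc an (y \<tau>) (u \<tau>) \<theta>'"
      unfolding vd by (rule TF_mult_unique[OF \<theta>(1)])
    moreover have "0 < Dq M fc (fst (y \<tau>))"
      using TF_solution_in_Sigma[OF assms \<open>\<tau> \<in> {0..tf}\<close>] regular M_spd by (simp add: Sigma_set_def Dq_pos)
    then have "TF_field fv M fc an (y \<tau>) (u \<tau>) \<theta> =
        gamma fv M fc an (fst (y \<tau>)) (fst (snd (y \<tau>))) (u \<tau>) *\<^sub>R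
          (fst (fDAE fv M fc (fst (y \<tau>)) (fst (snd (y \<tau>))) (u \<tau>)),
           snd (fDAE fv M fc (fst (y \<tau>)) (fst (snd (y \<tau>))) (u \<tau>)), 1)"
      using \<theta>(1) \<open>\<tau> \<in> {0..tf}\<close> persistent
      by (intro TF_field_sliding[OF _ balance _ an_pos]) (auto simp: TF_mult_def)
    ultimately show "?sliding \<tau>"
      using y' by (simp add: TF_field_def at_within)
  qed
qed

theorem theorem1:
  fixes fv :: "real^'n \<Rightarrow> real^'n \<Rightarrow> real^'m \<Rightarrow> real^'n"
    and M :: "real^'n \<Rightarrow> real^'n^'n"
    and fc :: "real^'n \<Rightarrow> real"
    and an tf :: real
    and u :: "real \<Rightarrow> real^'m"
    and y :: "real \<Rightarrow> (real^'n) \<times> (real^'n) \<times> real"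
  assumes fv_C2: "C2_fun (\<lambda>(q, v, w). fv q v w)"
    and M_C2: "C2_fun M"
    and fc_C2: "C2_fun fc"
    and M_spd: "\<forall>q. sym_pos_def (M q)"
    and regular: "\<forall>q. fc q = 0 \<longrightarrow> nvec fc q \<noteq> 0"
    and an_pos: "an > 0"
    and sol: "TF_solution fv M fc an u tf y"
    and init: "y 0 \<in> Sigma_set fc"
    and persistent: "\<forall>\<tau>\<in>{0..tf}. phi fv fc (fst (y \<tau>)) (fst (snd (y \<tau>))) (u \<tau>) \<le> 0"
  shows "(\<forall>\<tau>\<in>{0..tf}. y \<tau> \<in> Sigma_set fc
            \<and> 0 < gamma fv M fc an (fst (y \<tau>)) (fst (snd (y \<tau>))) (u \<tau>)
            \<and> gamma fv M fc an (fst (y \<tau>)) (fst (snd (y \<tau>))) (u \<tau>) \<le> 1)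
       \<and> (AE \<tau> in lborel. \<tau> \<in> {0..tf} \<longrightarrow>
            (\<exists>!\<theta>. TF_mult fc (y \<tau>) \<theta> \<and>
                 vector_derivative y (at \<tau> within {0..tf})
                   = fst \<theta> *\<^sub>R f1 fv (y \<tau>) (u \<tau>) + snd \<theta> *\<^sub>R f2 M fc an (y \<tau>))
          \<and> (y has_vector_derivative
                gamma fv M fc an (fst (y \<tau>)) (fst (snd (y \<tau>))) (u \<tau>) *\<^sub>R
                  (fst (fDAE fv M fc (fst (y \<tau>)) (fst (snd (y \<tau>))) (u \<tau>)),
                   snd (fDAE fv M fc (fst (y \<tau>)) (fst (snd (y \<tau>))) (u \<tau>)), 1))
              (at \<tau> within {0..tf}))"
proof (intro conjI ballI)
  fix \<tau> assume \<tau>: "\<tau> \<in> {0..tf}"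
  show "y \<tau> \<in> Sigma_set fc"
    by (rule TF_solution_in_Sigma[OF fc_C2 M_spd regular an_pos sol init persistent \<tau>])
  then have "0 < Dq M fc (fst (y \<tau>))" using regular M_spd by (simp add: Sigma_set_def Dq_pos)
  from gamma_pos_le_1[OF this an_pos persistent[rule_format, OF \<tau>]]
  show "0 < gamma fv M fc an (fst (y \<tau>)) (fst (snd (y \<tau>))) (u \<tau>)"
    "gamma fv M fc an (fst (y \<tau>)) (fst (snd (y \<tau>))) (u \<tau>) \<le> 1" .
qed (rule TF_solution_sliding_mode_ae[OF fc_C2 M_spd regular an_pos sol init persistent])

end
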